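(* Let $S=\{(X_m,y_m)\}_{m=1}^T\in\mathcal{S}_T$ be fitted in the cyclic ordering, let $n\ge1$, $k=nT$, and define the end-of-cycle average iterate $\bar w_n=\frac1n\sum_{n'=1}^n w_{Tn'}$. Then $$\frac1T\sum_{m=1}^T\|X_m\bar w_n-y_m\|^2\le\frac{T-1}{2n}\le\frac{T^2}{2k}.$$
   Context: Let $d\ge 1$, $T\ge1$. A task is a pair $(X_m,y_m)$ with $X_m\in\mathbb{R}^{n_m\times d}$, $y_m\in\mathbb{R}^{n_m}$ and $\operatorname{rank}(X_m)<d$. $\mathcal{S}_T$ denotes the set of collections $S=\{(X_m,y_m)\}_{m=1}^T$ of $T$ tasks such that $\|X_m\|\le 1$ (spectral norm) for all $m$ and there exists $w\in\mathbb{R}^d$ with $\|w\|\le 1$ and $y_m=X_mw$ for all $m$. Given $S$ and an ordering $\tau:\mathbb{N}^+\to\{1,\dots,T\}$, the iterates are $w_0=0$ and $w_t=w_{t-1}+X_{\tau(t)}^+(y_{\tau(t)}-X_{\tau(t)}w_{t-1})$, with $A^+$ the Moore–Penrose pseudoinverse. The cyclic ordering is $\tau(t)=((t-1)\bmod T)+1$. *)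

theory Defs
  imports "Jordan_Normal_Form.DL_Rank"
begin

definition vnorm :: "real vec \<Rightarrow> real" where
  "vnorm v = sqrt (v \<bullet> v)"

definition spec_norm :: "real mat \<Rightarrow> real" where
  "spec_norm A = Sup {vnorm (A *\<^sub>v v) | v. v \<in> carrier_vec (dim_col A) \<and> vnorm v \<le> 1}"

definition pinv :: "real mat \<Rightarrow> real mat" where
  "pinv A = (THE B. B \<in> carrier_mat (dim_col A) (dim_row A) \<and>
      A * B * A = A \<and> B * A * B = B \<and>
      transpose_mat (A * B) = A * B \<and> transpose_mat (B * A) = B * A)"

definition mrank :: "real mat \<Rightarrow> nat" where
  "mrank A = vec_space.rank (dim_row A) A"

definition is_task :: "nat \<Rightarrow> real mat \<Rightarrow> real vec \<Rightarrow> bool" where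
  "is_task d X y \<longleftrightarrow> dim_col X = d \<and> y \<in> carrier_vec (dim_row X) \<and> mrank X < d"

definition in_S :: "nat \<Rightarrow> nat \<Rightarrow> (nat \<Rightarrow> real mat) \<Rightarrow> (nat \<Rightarrow> real vec) \<Rightarrow> bool" where
  "in_S d T Xs ys \<longleftrightarrow>
     (\<forall>m\<in>{1..T}. is_task d (Xs m) (ys m) \<and> spec_norm (Xs m) \<le> 1) \<and>
     (\<exists>w \<in> carrier_vec d. vnorm w \<le> 1 \<and> (\<forall>m\<in>{1..T}. ys m = Xs m *\<^sub>v w))"

definition cyclic :: "nat \<Rightarrow> nat \<Rightarrow> nat" where
  "cyclic T t = ((t - 1) mod T) + 1"

fun iterate :: "nat \<Rightarrow> (nat \<Rightarrow> nat) \<Rightarrow> (nat \<Rightarrow> real mat) \<Rightarrow> (nat \<Rightarrow> real vec) \<Rightarrow> nat \<Rightarrow> real vec" where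
  "iterate d \<tau> Xs ys 0 = 0\<^sub>v d"
| "iterate d \<tau> Xs ys (Suc t) =
     iterate d \<tau> Xs ys t + pinv (Xs (\<tau> (Suc t))) *\<^sub>v (ys (\<tau> (Suc t)) - Xs (\<tau> (Suc t)) *\<^sub>v iterate d \<tau> Xs ys t)"

definition avg_iterate :: "nat \<Rightarrow> nat \<Rightarrow> (nat \<Rightarrow> real mat) \<Rightarrow> (nat \<Rightarrow> real vec) \<Rightarrow> nat \<Rightarrow> real vec" where
  "avg_iterate d T Xs ys n =
     vec d (\<lambda>i. (1 / real n) * (\<Sum>n'=1..n. iterate d (cyclic T) Xs ys (T * n') $ i))"

end

theory Submission
  imports Defs
begin

text \<open>Write e t = w t - w for the error of the iterates. Fitting task m maps e to e - Q e,
  where Q = pinv (X m) * X m is the orthogonal projection onto the row space of X m. Hence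
  X m * e = 0 right after task m has been fitted, and by Pythagoras every step lowers the energy
  |e|^2 by the squared length of the step. At the end of a cycle, task m was last fitted
  T - m steps earlier, so by Cauchy--Schwarz its squared residual is at most T - m times the energy
  lost during that cycle. Averaging over n cycles (Cauchy--Schwarz again), the losses telescope
  to at most |e 0|^2 = |w|^2 \<le> 1, and the sum of T - m over all tasks is T (T - 1) / 2.\<close>

lemma assoc_mult_mat_dims:
  "dim_col A = dim_row B \<Longrightarrow> dim_col B = dim_row C \<Longrightarrow> A * B * C = A * (B * C)"
  by (rule assoc_mult_mat[of A "dim_row A" "dim_col A" B "dim_col B" C "dim_col C"]) auto

lemma transpose_mult_dims:
  fixes A :: "'a :: comm_semiring_0 mat"
  shows "dim_col A = dim_row B \<Longrightarrow> transpose_mat (A * B) = transpose_mat B * transpose_mat A"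
  by (rule transpose_mult[of A "dim_row A" "dim_col A" B "dim_col B"]) auto

text \<open>Associativity and transposition with side conditions on dimensions only: given the
  dimensions of the factors, simp with these rules brings any product of matrices into
  right-associated form with transposes pushed to the factors.\<close>
lemmas mat_mult_normalize = assoc_mult_mat_dims transpose_mult_dims carrier_matD

lemma scalar_prod_self_nonneg: "0 \<le> (v :: real vec) \<bullet> v"
  unfolding scalar_prod_def by (intro sum_nonneg) auto

lemma scalar_prod_self_eq_0:
  assumes "(v :: real vec) \<in> carrier_vec n" and "v \<bullet> v = 0"
  shows "v = 0\<^sub>v n"
proof -
  have "\<forall>i\<in>{0..<n}. v $ i * v $ i = 0"
    using assms by (subst sum_nonneg_eq_0_iff[symmetric]) (auto simp: scalar_prod_def)
  then show ?thesis using assms(1) by (intro eq_vecI) auto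
qed

lemma vnorm_nonneg: "0 \<le> vnorm v"
  unfolding vnorm_def using scalar_prod_self_nonneg by simp

lemma vnorm_sq: "(vnorm v)\<^sup>2 = v \<bullet> v"
  unfolding vnorm_def using scalar_prod_self_nonneg by simp

lemma vnorm_smult: "vnorm (a \<cdot>\<^sub>v v) = \<bar>a\<bar> * vnorm v"
proof -
  have "(a \<cdot>\<^sub>v v) \<bullet> (a \<cdot>\<^sub>v v) = a\<^sup>2 * (v \<bullet> v)"
    by (simp add: scalar_prod_def sum_distrib_left power2_eq_square algebra_simps)
  then show ?thesis unfolding vnorm_def by (simp add: real_sqrt_mult)
qed

lemma vnorm_eq_0_iff:
  assumes "v \<in> carrier_vec n"
  shows "vnorm v = 0 \<longleftrightarrow> v = 0\<^sub>v n"
  using scalar_prod_self_eq_0[OF assms] assms unfolding vnorm_def by (auto simp: scalar_prod_def)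

lemma abs_index_le_vnorm:
  assumes "v \<in> carrier_vec n" and "j < n"
  shows "\<bar>v $ j\<bar> \<le> vnorm v"
proof -
  have "(v $ j)\<^sup>2 \<le> (\<Sum>i = 0..<n. (v $ i)\<^sup>2)"
    using assms by (intro member_le_sum) auto
  also have "\<dots> = (vnorm v)\<^sup>2"
    unfolding vnorm_sq using assms by (simp add: scalar_prod_def power2_eq_square)
  finally show ?thesis using vnorm_nonneg by (metis abs_le_square_iff abs_of_nonneg)
qed

lemma square_sum_le_card_mult_sum_squares:
  fixes a :: "'b \<Rightarrow> real"
  assumes "finite J"
  shows "(\<Sum>j\<in>J. a j)\<^sup>2 \<le> real (card J) * (\<Sum>j\<in>J. (a j)\<^sup>2)"
proof -
  have "0 \<le> (\<Sum>i\<in>J. \<Sum>j\<in>J. (a i - a j)\<^sup>2)" by (intro sum_nonneg) auto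
  also have "\<dots> = (\<Sum>i\<in>J. real (card J) * (a i)\<^sup>2 + (\<Sum>j\<in>J. (a j)\<^sup>2) - 2 * a i * (\<Sum>j\<in>J. a j))"
    by (intro sum.cong refl)
      (simp add: power2_diff sum.distrib sum_subtractf sum_distrib_left mult.assoc)
  also have "\<dots> = 2 * (real (card J) * (\<Sum>j\<in>J. (a j)\<^sup>2)) - 2 * (\<Sum>j\<in>J. a j)\<^sup>2"
    by (simp add: sum.distrib sum_subtractf power2_eq_square
        sum_distrib_left[symmetric] sum_distrib_right[symmetric])
  finally show ?thesis by simp
qed

lemma vnorm_sq_le_card_mult_sum:
  fixes u :: "real vec" and v :: "'b \<Rightarrow> real vec"
  assumes J: "finite J" and u: "u \<in> carrier_vec n" and v: "\<And>j. j \<in> J \<Longrightarrow> v j \<in> carrier_vec n"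
    and u_eq: "\<And>k. k < n \<Longrightarrow> u $ k = c * (\<Sum>j\<in>J. v j $ k)"
  shows "(vnorm u)\<^sup>2 \<le> c\<^sup>2 * real (card J) * (\<Sum>j\<in>J. (vnorm (v j))\<^sup>2)"
proof -
  have "(vnorm u)\<^sup>2 = (\<Sum>k = 0..<n. c\<^sup>2 * (\<Sum>j\<in>J. v j $ k)\<^sup>2)"
    unfolding vnorm_sq using u by (simp add: scalar_prod_def u_eq power2_eq_square mult_ac)
  also have "\<dots> \<le> (\<Sum>k = 0..<n. c\<^sup>2 * (real (card J) * (\<Sum>j\<in>J. (v j $ k)\<^sup>2)))"
    by (intro sum_mono mult_left_mono square_sum_le_card_mult_sum_squares J) auto
  also have "\<dots> = c\<^sup>2 * real (card J) * (\<Sum>j\<in>J. \<Sum>k = 0..<n. (v j $ k)\<^sup>2)"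
    by (simp add: sum_distrib_left sum.swap[of _ J] mult.assoc)
  also have "(\<Sum>j\<in>J. \<Sum>k = 0..<n. (v j $ k)\<^sup>2) = (\<Sum>j\<in>J. (vnorm (v j))\<^sup>2)"
  proof (rule sum.cong)
    fix j assume "j \<in> J"
    then show "(\<Sum>k = 0..<n. (v j $ k)\<^sup>2) = (vnorm (v j))\<^sup>2"
      unfolding vnorm_sq using v[of j] by (simp add: scalar_prod_def power2_eq_square)
  qed simp
  finally show ?thesis .
qed

lemma vnorm_sq_diff_le_sum_steps:
  fixes v :: "nat \<Rightarrow> real vec"
  assumes v: "\<And>i. v i \<in> carrier_vec n"
  shows "(vnorm (v 0 - v j))\<^sup>2 \<le> real j * (\<Sum>i<j. (vnorm (v i - v (Suc i)))\<^sup>2)"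
proof -
  have "(vnorm (v 0 - v j))\<^sup>2 \<le> 1\<^sup>2 * real (card {..<j}) * (\<Sum>i<j. (vnorm (v i - v (Suc i)))\<^sup>2)"
  proof (rule vnorm_sq_le_card_mult_sum)
    fix k assume k: "k < n"
    have "(\<Sum>i<j. (v i - v (Suc i)) $ k) = (\<Sum>i<j. v i $ k - v (Suc i) $ k)"
      using k by (intro sum.cong) (simp_all add: v[THEN carrier_vecD])
    also have "\<dots> = v 0 $ k - v j $ k" by (rule sum_lessThan_telescope')
    finally show "(v 0 - v j) $ k = 1 * (\<Sum>i<j. (v i - v (Suc i)) $ k)"
      using k by (simp add: v[THEN carrier_vecD])
  qed (use v in auto)
  then show ?thesis by simp
qed

lemma vnorm_uminus: "vnorm (- v) = vnorm v"
  unfolding vnorm_def scalar_prod_def by simp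

lemma vec_eq_if_minus_eq_0:
  fixes v w :: "'a :: ab_group_add vec"
  assumes "v \<in> carrier_vec n" "w \<in> carrier_vec n" "v - w = 0\<^sub>v n"
  shows "v = w"
proof (rule eq_vecI)
  fix i assume "i < dim_vec w"
  then have "v $ i - w $ i = 0"
    using assms index_minus_vec(1)[of i w v] index_zero_vec(1)[of i n] by (metis carrier_vecD)
  then show "v $ i = w $ i" by simp
qed (use assms in simp)

lemma mat_eq_if_mult_mat_vec_eq:
  fixes A B :: "'a :: semiring_1 mat"
  assumes A: "A \<in> carrier_mat nr nc" and B: "B \<in> carrier_mat nr nc"
    and eq: "\<And>x. x \<in> carrier_vec nc \<Longrightarrow> A *\<^sub>v x = B *\<^sub>v x"
  shows "A = B"
proof (rule eq_matI)
  fix i j assume ij: "i < dim_row B" "j < dim_col B"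
  have entry: "C $$ (i, j) = (C *\<^sub>v unit_vec nc j) $ i" if "C \<in> carrier_mat nr nc" for C :: "'a mat"
    using that ij B by (simp add: scalar_prod_right_unit)
  show "A $$ (i, j) = B $$ (i, j)"
    unfolding entry[OF A] entry[OF B] eq[OF unit_vec_carrier] ..
qed (use A B in auto)

lemma mult_mat_vec_index_scaled_sum:
  fixes X :: "'a :: comm_ring mat"
  assumes X: "X \<in> carrier_mat r n" and J: "finite J"
    and u: "u \<in> carrier_vec n" and v: "\<And>j. j \<in> J \<Longrightarrow> v j \<in> carrier_vec n"
    and u_eq: "\<And>i. i < n \<Longrightarrow> u $ i = c * (\<Sum>j\<in>J. v j $ i)"
    and k: "k < r"
  shows "(X *\<^sub>v u) $ k = c * (\<Sum>j\<in>J. (X *\<^sub>v v j) $ k)"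
proof -
  have "(X *\<^sub>v u) $ k = (\<Sum>i = 0..<n. X $$ (k, i) * (c * (\<Sum>j\<in>J. v j $ i)))"
    using X u k by (simp add: scalar_prod_def u_eq)
  also have "\<dots> = c * (\<Sum>j\<in>J. \<Sum>i = 0..<n. X $$ (k, i) * v j $ i)"
    by (simp add: sum_distrib_left sum.swap[of _ J] mult.left_commute)
  also have "(\<Sum>j\<in>J. \<Sum>i = 0..<n. X $$ (k, i) * v j $ i) = (\<Sum>j\<in>J. (X *\<^sub>v v j) $ k)"
  proof (rule sum.cong)
    fix j assume "j \<in> J"
    then show "(\<Sum>i = 0..<n. X $$ (k, i) * v j $ i) = (X *\<^sub>v v j) $ k"
      using X v[of j] k by (simp add: scalar_prod_def)
  qed simp
  finally show ?thesis .
qed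

section \<open>Spectral norm\<close>

lemma bdd_above_spec_norm_set:
  fixes X :: "real mat"
  shows "bdd_above {vnorm (X *\<^sub>v v) | v. v \<in> carrier_vec (dim_col X) \<and> vnorm v \<le> 1}"
proof -
  let ?B = "\<Sum>i = 0..<dim_row X. (\<Sum>j = 0..<dim_col X. \<bar>X $$ (i, j)\<bar>)\<^sup>2"
  have "vnorm (X *\<^sub>v v) \<le> sqrt ?B" if v: "v \<in> carrier_vec (dim_col X)" "vnorm v \<le> 1" for v
  proof -
    have "\<bar>(X *\<^sub>v v) $ i\<bar> \<le> (\<Sum>j = 0..<dim_col X. \<bar>X $$ (i, j)\<bar>)" if i: "i < dim_row X" for i
    proof -
      have "\<bar>(X *\<^sub>v v) $ i\<bar> \<le> (\<Sum>j = 0..<dim_col X. \<bar>X $$ (i, j) * v $ j\<bar>)"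
        using i v by (simp add: scalar_prod_def sum_abs)
      also have "\<dots> \<le> (\<Sum>j = 0..<dim_col X. \<bar>X $$ (i, j)\<bar>)"
        using v abs_index_le_vnorm[OF v(1)]
        by (intro sum_mono) (fastforce simp: abs_mult intro: mult_left_le)
      finally show ?thesis .
    qed
    then have "((X *\<^sub>v v) $ i)\<^sup>2 \<le> (\<Sum>j = 0..<dim_col X. \<bar>X $$ (i, j)\<bar>)\<^sup>2"
      if "i < dim_row X" for i
      using that by (metis abs_ge_zero power2_abs power_mono)
    then have "(vnorm (X *\<^sub>v v))\<^sup>2 \<le> ?B"
      unfolding vnorm_sq scalar_prod_def by (auto intro!: sum_mono simp flip: power2_eq_square)
    then show ?thesis using vnorm_nonneg by (metis real_le_rsqrt)
  qed
  then show ?thesis by (intro bdd_aboveI[of _ "sqrt ?B"]) blast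
qed

lemma vnorm_mult_mat_vec_le:
  fixes X :: "real mat"
  assumes X: "X \<in> carrier_mat r d" and norm_X: "spec_norm X \<le> 1" and v: "v \<in> carrier_vec d"
  shows "vnorm (X *\<^sub>v v) \<le> vnorm v"
proof (cases "vnorm v = 0")
  case True
  then show ?thesis using X v vnorm_eq_0_iff[OF v] by (simp add: vnorm_def scalar_prod_def)
next
  case False
  then have pos: "vnorm v > 0" using vnorm_nonneg less_eq_real_def by metis
  define x where "x = (1 / vnorm v) \<cdot>\<^sub>v v"
  have x: "x \<in> carrier_vec (dim_col X)" "vnorm x \<le> 1"
    using X v pos by (auto simp: x_def vnorm_smult)
  have "vnorm (X *\<^sub>v x) \<le> spec_norm X"
    unfolding spec_norm_def using x by (intro cSup_upper bdd_above_spec_norm_set) blast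
  moreover have "vnorm (X *\<^sub>v x) = vnorm (X *\<^sub>v v) / vnorm v"
    unfolding x_def mult_mat_vec[OF X v] vnorm_smult using pos by simp
  ultimately have "vnorm (X *\<^sub>v v) / vnorm v \<le> 1" using norm_X by linarith
  then show ?thesis using pos by (simp add: field_simps)
qed

section \<open>Moore--Penrose pseudoinverse\<close>

lemma mult_mat_vec_eq_0_if_gram:
  fixes A :: "real mat"
  assumes A: "A \<in> carrier_mat nr nc" and x: "x \<in> carrier_vec nc"
    and "(transpose_mat A * A) *\<^sub>v x = 0\<^sub>v nc"
  shows "A *\<^sub>v x = 0\<^sub>v nr"
proof -
  have "(A *\<^sub>v x) \<bullet> (A *\<^sub>v x) = (transpose_mat A *\<^sub>v (A *\<^sub>v x)) \<bullet> x"
    using transpose_vec_mult_scalar[OF A x, of "A *\<^sub>v x"] A x by simp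
  also have "\<dots> = 0" using assms by simp
  finally show ?thesis using A x by (intro scalar_prod_self_eq_0) auto
qed

lemma mult_generalized_inverse_gram:
  fixes A :: "real mat"
  assumes A: "A \<in> carrier_mat nr nc" and G: "G \<in> carrier_mat nc nc"
    and MGM: "transpose_mat A * A * G * (transpose_mat A * A) = transpose_mat A * A"
  shows "A * G * (transpose_mat A * A) = A"
proof -
  define M where "M = transpose_mat A * A"
  have M: "M \<in> carrier_mat nc nc" using A by (simp add: M_def)
  have on_vectors: "A * (G * M) *\<^sub>v x = A *\<^sub>v x" if x: "x \<in> carrier_vec nc" for x
  proof -
    define u where "u = (G * M) *\<^sub>v x - x"
    have GMx: "(G * M) *\<^sub>v x \<in> carrier_vec nc" using G M x by simp
    have u: "u \<in> carrier_vec nc" using GMx x by (simp add: u_def)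
    have "M *\<^sub>v u = (M * (G * M)) *\<^sub>v x - M *\<^sub>v x"
      unfolding u_def mult_minus_distrib_mat_vec[OF M GMx x]
      using assoc_mult_mat_vec[OF M mult_carrier_mat[OF G M] x] by simp
    also have "M * (G * M) = M" using MGM A G by (simp add: M_def mat_mult_normalize)
    finally have "M *\<^sub>v u = 0\<^sub>v nc" using M x by simp
    then have "A *\<^sub>v u = 0\<^sub>v nr" using mult_mat_vec_eq_0_if_gram[OF A u] by (simp add: M_def)
    then have diff: "A *\<^sub>v ((G * M) *\<^sub>v x) - A *\<^sub>v x = 0\<^sub>v nr"
      unfolding u_def mult_minus_distrib_mat_vec[OF A GMx x] .
    have "A *\<^sub>v ((G * M) *\<^sub>v x) = A *\<^sub>v x"
      by (rule vec_eq_if_minus_eq_0[OF _ _ diff]) (use A GMx x in simp_all)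
    then show ?thesis using assoc_mult_mat_vec[OF A mult_carrier_mat[OF G M] x] by simp
  qed
  have "A * (G * M) = A"
    by (rule mat_eq_if_mult_mat_vec_eq[OF _ A on_vectors]) (use A G M in simp)
  then show ?thesis using A G by (simp add: M_def mat_mult_normalize)
qed

lemma row_echelon_form_generalized_inverse:
  fixes C :: "'a :: field mat"
  assumes C: "C \<in> carrier_mat nr nc" and "row_echelon_form C"
  shows "\<exists>R \<in> carrier_mat nc nr. C * R * C = C"
proof -
  from assms obtain f where "pivot_fun C f nc" unfolding row_echelon_form_def by auto
  note pivot = pivot_funD[OF _ this, of nr]
  \<comment> \<open>R picks the pivot columns, so C * R is the 0/1 diagonal matrix of the pivot rows.\<close>
  define R :: "'a mat" where "R = mat nc nr (\<lambda>(j, i). if f i < nc \<and> j = f i then 1 else 0)"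
  have R: "R \<in> carrier_mat nc nr" unfolding R_def by auto
  have CR: "(C * R) $$ (i', i) = (if f i < nc \<and> i' = i then 1 else 0)" if "i' < nr" "i < nr" for i' i
  proof -
    have "(C * R) $$ (i', i) = (\<Sum>j = 0..<nc. C $$ (i', j) * (if f i < nc \<and> j = f i then 1 else 0))"
      using that C R unfolding R_def by (auto simp: scalar_prod_def)
    also have "\<dots> = (if f i < nc then C $$ (i', f i) else 0)"
      by (auto simp: if_distrib cong: if_cong)
    finally show ?thesis
      using pivot(4)[OF _ that(2)] pivot(5)[OF _ that(2) _ that(1)] C by auto
  qed
  have "C * R * C = C"
  proof (rule eq_matI)
    fix i' k assume i': "i' < dim_row C" and k: "k < dim_col C"
    have "(C * R * C) $$ (i', k) = (\<Sum>i = 0..<nr. (C * R) $$ (i', i) * C $$ (i, k))"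
      using i' k C R by (subst index_mult_mat(1)) (auto simp: scalar_prod_def simp del: assoc_mult_mat)
    also have "\<dots> = (\<Sum>i = 0..<nr. if i = i' then (if f i' < nc then C $$ (i', k) else 0) else 0)"
      using i' C by (intro sum.cong) (auto simp: CR)
    also have "\<dots> = (if f i' < nc then C $$ (i', k) else 0)"
      using i' C by simp
    also have "\<dots> = C $$ (i', k)"
      \<comment> \<open>a row without pivot is zero\<close>
      using pivot(1)[of i'] pivot(2)[of i' k] i' k C by fastforce
    finally show "(C * R * C) $$ (i', k) = C $$ (i', k)" .
  qed (use C R in auto)
  with R show ?thesis by blast
qed

lemma generalized_inverse_exists:
  fixes A :: "'a :: field mat"
  assumes A: "A \<in> carrier_mat nr nc"
  shows "\<exists>F \<in> carrier_mat nc nr. A * F * A = A"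
proof -
  define C where "C = gauss_jordan_single A"
  note gj = gauss_jordan_single[OF A C_def[symmetric]]
  from gj(4) obtain P Q where CPA: "C = P * A" and P: "P \<in> carrier_mat nr nr" and Q: "Q \<in> carrier_mat nr nr"
    and QP: "Q * P = 1\<^sub>m nr" by blast
  obtain R where R: "R \<in> carrier_mat nc nr" and CRC: "C * R * C = C"
    using row_echelon_form_generalized_inverse[OF gj(2,3)] by blast
  have QC: "Q * C = A" using A P Q QP by (simp add: CPA flip: assoc_mult_mat)
  have "A * (R * P) * A = Q * C * (R * P) * A" by (simp add: QC)
  also have "\<dots> = Q * (C * R * (P * A))" using A P Q R gj(2) by (simp add: mat_mult_normalize)
  also have "\<dots> = Q * (C * R * C)" by (simp add: CPA)
  also have "\<dots> = A" by (simp add: CRC QC)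
  finally show ?thesis using R P by (intro bexI[of _ "R * P"]) auto
qed

lemma symmetric_generalized_inverse_exists:
  fixes M :: "'a :: field mat"
  assumes M: "M \<in> carrier_mat n n" and sym: "transpose_mat M = M"
  shows "\<exists>G \<in> carrier_mat n n. transpose_mat G = G \<and> M * G * M = M"
proof -
  obtain F where F: "F \<in> carrier_mat n n" and MFM: "M * F * M = M"
    using generalized_inverse_exists[OF M] by blast
  have MFtM: "M * transpose_mat F * M = M"
    using arg_cong[OF MFM, of transpose_mat] M F sym by (simp add: mat_mult_normalize)
  define G where "G = F * M * transpose_mat F"
  have "M * G * M = M * F * M * transpose_mat F * M"
    using M F by (simp add: G_def mat_mult_normalize)
  also have "\<dots> = M" using MFM MFtM by simp
  finally show ?thesis
    using M F sym by (intro bexI[of _ G]) (auto simp: G_def mat_mult_normalize)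
qed

lemma moore_penrose_inverse_unique:
  fixes A B C :: "real mat"
  assumes A: "A \<in> carrier_mat nr nc" and B: "B \<in> carrier_mat nc nr" and C: "C \<in> carrier_mat nc nr"
    and B1: "A * B * A = A" and B2: "B * A * B = B"
    and B3: "transpose_mat (A * B) = A * B" and B4: "transpose_mat (B * A) = B * A"
    and C1: "A * C * A = A" and C2: "C * A * C = C"
    and C3: "transpose_mat (A * C) = A * C" and C4: "transpose_mat (C * A) = C * A"
  shows "B = C"
proof -
  have "A * B = A * C * A * B" by (simp add: C1)
  also have "\<dots> = transpose_mat (A * C) * transpose_mat (A * B)"
    using A B C by (simp add: B3 C3 mat_mult_normalize)
  also have "\<dots> = transpose_mat (A * B * A * C)" using A B C by (simp add: mat_mult_normalize)
  also have "\<dots> = A * C" by (simp add: B1 C3)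
  finally have AB: "A * B = A * C" .
  have "B * A = B * (A * C * A)" by (simp add: C1)
  also have "\<dots> = transpose_mat (B * A) * transpose_mat (C * A)"
    using A B C by (simp add: B4 C4 mat_mult_normalize)
  also have "\<dots> = transpose_mat (C * (A * B * A))" using A B C by (simp add: mat_mult_normalize)
  also have "\<dots> = C * A" by (simp add: B1 C4)
  finally have BA: "B * A = C * A" .
  have "B = B * (A * B)" using A B B2 by (simp add: mat_mult_normalize)
  also have "\<dots> = B * A * C" using A B C by (simp add: AB)
  also have "\<dots> = C * A * C" by (simp add: BA)
  finally show ?thesis using C2 by simp
qed

definition moore_penrose :: "real mat \<Rightarrow> real mat \<Rightarrow> bool" where
  "moore_penrose A B \<longleftrightarrow> B \<in> carrier_mat (dim_col A) (dim_row A) \<and>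
      A * B * A = A \<and> B * A * B = B \<and>
      transpose_mat (A * B) = A * B \<and> transpose_mat (B * A) = B * A"

lemma moore_penrose_unique:
  assumes "moore_penrose A B" and "moore_penrose A C"
  shows "B = C"
  using assms moore_penrose_inverse_unique[of A "dim_row A" "dim_col A" B C]
  unfolding moore_penrose_def by auto

text \<open>Urquhart's formula: the pseudoinverse built from symmetric generalized inverses G of
  A^T A and H of A A^T.\<close>
lemma moore_penrose_from_generalized_inverses:
  fixes A :: "real mat"
  assumes A: "A \<in> carrier_mat r c"
    and G: "G \<in> carrier_mat c c" and symG: "transpose_mat G = G"
    and MGM: "transpose_mat A * A * G * (transpose_mat A * A) = transpose_mat A * A"
    and H: "H \<in> carrier_mat r r" and symH: "transpose_mat H = H"
    and NHN: "A * transpose_mat A * H * (A * transpose_mat A) = A * transpose_mat A"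
  shows "moore_penrose A (transpose_mat A * H * A * G * transpose_mat A)"
proof -
  define B where "B = transpose_mat A * H * A * G * transpose_mat A"
  have AGM: "A * G * transpose_mat A * A = A"
    using mult_generalized_inverse_gram[OF A G MGM] A G by (simp add: mat_mult_normalize)
  have NHA: "A * transpose_mat A * H * A = A"
  proof -
    have "transpose_mat A * H * (A * transpose_mat A) = transpose_mat A"
      using mult_generalized_inverse_gram[of "transpose_mat A" c r H] A H NHN by simp
    from arg_cong[OF this, of transpose_mat] show ?thesis
      using A H symH by (simp add: mat_mult_normalize)
  qed
  have "A * B = (A * transpose_mat A * H * A) * G * transpose_mat A"
    using A G H by (simp add: B_def mat_mult_normalize)
  then have AB: "A * B = A * G * transpose_mat A" by (simp only: NHA)
  have "B * A = transpose_mat A * H * (A * G * transpose_mat A * A)"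
    using A G H by (simp add: B_def mat_mult_normalize)
  then have BA: "B * A = transpose_mat A * H * A" by (simp only: AGM)
  have "B * A * B = transpose_mat A * H * A * B" by (simp only: BA)
  also have "\<dots> = transpose_mat A * H * (A * transpose_mat A * H * A) * G * transpose_mat A"
    using A G H by (simp add: B_def mat_mult_normalize)
  finally have "B * A * B = B" unfolding B_def by (simp only: NHA)
  moreover have "A * B * A = A" by (simp only: AB AGM)
  moreover have "transpose_mat (A * B) = A * B"
    using A G symG by (simp add: AB mat_mult_normalize)
  moreover have "transpose_mat (B * A) = B * A"
    using A H symH by (simp add: BA mat_mult_normalize)
  moreover have "B \<in> carrier_mat c r"
    unfolding B_def using A G H by (intro carrier_matI) (simp_all add: carrier_matD)
  ultimately show ?thesis using A unfolding moore_penrose_def B_def[symmetric] by auto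
qed

lemma moore_penrose_exists: "\<exists>B. moore_penrose A B"
proof -
  define r c where "r = dim_row A" and "c = dim_col A"
  have A: "A \<in> carrier_mat r c" unfolding r_def c_def by (rule carrier_matI) (rule refl)+
  obtain G where "G \<in> carrier_mat c c" "transpose_mat G = G"
    "transpose_mat A * A * G * (transpose_mat A * A) = transpose_mat A * A"
    using symmetric_generalized_inverse_exists[of "transpose_mat A * A" c] A
    by (auto simp: mat_mult_normalize)
  moreover obtain H where "H \<in> carrier_mat r r" "transpose_mat H = H"
    "A * transpose_mat A * H * (A * transpose_mat A) = A * transpose_mat A"
    using symmetric_generalized_inverse_exists[of "A * transpose_mat A" r] A
    by (auto simp: mat_mult_normalize)
  ultimately show ?thesis using moore_penrose_from_generalized_inverses[OF A] by blast
qed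

lemma moore_penrose_pinv: "moore_penrose A (pinv A)"
proof -
  have "pinv A = (THE B. moore_penrose A B)" unfolding pinv_def moore_penrose_def ..
  then show ?thesis
    using theI'[of "moore_penrose A"] moore_penrose_exists moore_penrose_unique by metis
qed

lemma pinv_carrier: "pinv A \<in> carrier_mat (dim_col A) (dim_row A)"
  using moore_penrose_pinv[of A] by (simp add: moore_penrose_def)

lemma dim_row_pinv [simp]: "dim_row (pinv A) = dim_col A"
  using pinv_carrier[of A] by simp

lemma transpose_pinv_mult: "transpose_mat (pinv A * A) = pinv A * A"
  using moore_penrose_pinv[of A] by (simp add: moore_penrose_def)

lemma mult_pinv_mult: "A * (pinv A * A) = A"
  using moore_penrose_pinv[of A] pinv_carrier[of A]
  by (simp add: moore_penrose_def mat_mult_normalize)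

lemma pinv_mult_idem: "pinv A * A * (pinv A * A) = pinv A * A"
proof -
  have "pinv A * A * (pinv A * A) = pinv A * A * pinv A * A"
    using pinv_carrier[of A] by (simp add: mat_mult_normalize)
  then show ?thesis using moore_penrose_pinv[of A] by (simp add: moore_penrose_def)
qed

lemma vnorm_sq_proj:
  fixes Q :: "real mat"
  assumes Q: "Q \<in> carrier_mat n n" and sym: "transpose_mat Q = Q" and idem: "Q * Q = Q"
    and e: "e \<in> carrier_vec n"
  shows "(vnorm (Q *\<^sub>v e))\<^sup>2 = (vnorm e)\<^sup>2 - (vnorm (e - Q *\<^sub>v e))\<^sup>2"
proof -
  define z where "z = Q *\<^sub>v e"
  have z: "z \<in> carrier_vec n" using Q e by (simp add: z_def)
  have "z \<bullet> z = (transpose_mat Q *\<^sub>v z) \<bullet> e"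
    using transpose_vec_mult_scalar[OF Q e z] by (simp add: z_def)
  also have "\<dots> = z \<bullet> e" using Q e by (simp add: sym z_def idem flip: assoc_mult_mat_vec)
  finally have zz: "z \<bullet> z = z \<bullet> e" .
  have "(e - z) \<bullet> (e - z) = e \<bullet> e - 2 * (z \<bullet> e) + z \<bullet> z"
    using e z unfolding scalar_prod_def
    by (simp add: algebra_simps sum.distrib sum_subtractf sum_distrib_left)
  then show ?thesis unfolding vnorm_sq z_def[symmetric] using zz by simp
qed

lemma cyclic_in_range: "0 < T \<Longrightarrow> cyclic T t \<in> {1..T}"
  unfolding cyclic_def by (simp add: Suc_le_eq)

lemma cyclic_mult_add:
  assumes "m \<in> {1..T}"
  shows "cyclic T (T * q + m) = m"
proof -
  obtain m' where "m = Suc m'" and "m' < T" using assms by (cases m) auto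
  then show ?thesis unfolding cyclic_def by simp
qed

section \<open>Error dynamics of the iterates\<close>

locale consistent_iteration =
  fixes d T :: nat and Xs :: "nat \<Rightarrow> real mat" and ys :: "nat \<Rightarrow> real vec"
    and w :: "real vec" and \<tau> :: "nat \<Rightarrow> nat"
  assumes dim_col_Xs: "\<And>m. m \<in> {1..T} \<Longrightarrow> dim_col (Xs m) = d"
    and spec_norm_Xs: "\<And>m. m \<in> {1..T} \<Longrightarrow> spec_norm (Xs m) \<le> 1"
    and ys_eq: "\<And>m. m \<in> {1..T} \<Longrightarrow> ys m = Xs m *\<^sub>v w"
    and w_carrier: "w \<in> carrier_vec d"
    and \<tau>_range: "\<And>t. \<tau> t \<in> {1..T}"
begin

definition err :: "nat \<Rightarrow> real vec" where
  "err t = iterate d \<tau> Xs ys t - w"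

lemma Xs_carrier: "m \<in> {1..T} \<Longrightarrow> Xs m \<in> carrier_mat (dim_row (Xs m)) d"
  using dim_col_Xs by (intro carrier_matI) simp_all

lemma iterate_carrier: "iterate d \<tau> Xs ys t \<in> carrier_vec d"
  by (cases t) (auto intro!: carrier_vecI simp: dim_col_Xs[OF \<tau>_range])

lemma err_carrier: "err t \<in> carrier_vec d"
  using iterate_carrier w_carrier by (simp add: err_def)

lemma err_Suc:
  fixes t :: nat
  defines "X \<equiv> Xs (\<tau> (Suc t))"
  shows "err (Suc t) = err t - (pinv X * X) *\<^sub>v err t"
proof -
  \<comment> \<open>A carrier fact X \<in> carrier_mat (dim_row X) d makes simp loop, hence the name r.\<close>
  define r where "r = dim_row X"
  define v where "v = iterate d \<tau> Xs ys t"
  have X: "X \<in> carrier_mat r d" unfolding r_def X_def by (rule Xs_carrier[OF \<tau>_range])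
  have P: "pinv X \<in> carrier_mat d r" using pinv_carrier[of X] carrier_matD[OF X] by simp
  have PX: "pinv X * X \<in> carrier_mat d d" using P X by simp
  have v: "v \<in> carrier_vec d" unfolding v_def by (rule iterate_carrier)
  have w: "w \<in> carrier_vec d" by (rule w_carrier)
  have "pinv X *\<^sub>v (ys (\<tau> (Suc t)) - X *\<^sub>v v) = pinv X *\<^sub>v (X *\<^sub>v (w - v))"
    using ys_eq[OF \<tau>_range] mult_minus_distrib_mat_vec[OF X w v] by (simp add: X_def)
  also have "\<dots> = (pinv X * X) *\<^sub>v w - (pinv X * X) *\<^sub>v v"
    using assoc_mult_mat_vec[OF P X, of "w - v"] mult_minus_distrib_mat_vec[OF PX w v] w v by simp
  finally have step: "iterate d \<tau> Xs ys (Suc t) = v + ((pinv X * X) *\<^sub>v w - (pinv X * X) *\<^sub>v v)"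
    by (simp add: v_def X_def)
  have "(pinv X * X) *\<^sub>v err t = (pinv X * X) *\<^sub>v v - (pinv X * X) *\<^sub>v w"
    unfolding err_def v_def[symmetric] by (rule mult_minus_distrib_mat_vec[OF PX v w])
  then show ?thesis
    using PX v w unfolding err_def step v_def[symmetric] by (intro eq_vecI) auto
qed

lemma mult_err_Suc_eq_0:
  fixes t :: nat
  defines "X \<equiv> Xs (\<tau> (Suc t))"
  shows "X *\<^sub>v err (Suc t) = 0\<^sub>v (dim_row X)"
proof -
  define r where "r = dim_row X"
  have X: "X \<in> carrier_mat r d" unfolding r_def X_def by (rule Xs_carrier[OF \<tau>_range])
  have P: "pinv X \<in> carrier_mat d r" using pinv_carrier[of X] carrier_matD[OF X] by simp
  have e: "err t \<in> carrier_vec d" by (rule err_carrier)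
  have "X *\<^sub>v err (Suc t) = X *\<^sub>v err t - (X * (pinv X * X)) *\<^sub>v err t"
    using err_Suc[of t] mult_minus_distrib_mat_vec[OF X e, of "(pinv X * X) *\<^sub>v err t"]
      assoc_mult_mat_vec[OF X _ e, of "pinv X * X"] P X e
    by (simp add: X_def)
  also have "\<dots> = 0\<^sub>v r" using X e by (simp add: mult_pinv_mult)
  finally show ?thesis by (simp add: r_def)
qed

lemma err_step_sq:
  "(vnorm (err t - err (Suc t)))\<^sup>2 = (vnorm (err t))\<^sup>2 - (vnorm (err (Suc t)))\<^sup>2"
proof -
  define X where "X = Xs (\<tau> (Suc t))"
  define Q where "Q = pinv X * X"
  have Q: "Q \<in> carrier_mat d d"
    using dim_col_Xs[OF \<tau>_range] by (intro carrier_matI) (simp_all add: Q_def X_def)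
  have e: "err t \<in> carrier_vec d" by (rule err_carrier)
  have Suc: "err (Suc t) = err t - Q *\<^sub>v err t" using err_Suc by (simp add: Q_def X_def)
  have "err t - err (Suc t) = Q *\<^sub>v err t" unfolding Suc using Q e by (intro eq_vecI) auto
  then show ?thesis
    using vnorm_sq_proj[OF Q _ _ e] transpose_pinv_mult pinv_mult_idem
    unfolding Suc by (simp add: Q_def)
qed

lemma err_sq_decreasing: "(vnorm (err (t + j)))\<^sup>2 \<le> (vnorm (err t))\<^sup>2"
proof (induction j)
  case (Suc j)
  then show ?case using err_step_sq[of "t + j"] zero_le_power2[of "vnorm (err (t + j) - err (Suc (t + j)))"]
    by simp
qed simp

lemma residual_sq_after_steps_le:
  assumes "0 < t"
  shows "(vnorm (Xs (\<tau> t) *\<^sub>v err (t + j)))\<^sup>2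
    \<le> real j * ((vnorm (err t))\<^sup>2 - (vnorm (err (t + j)))\<^sup>2)"
proof -
  define X where "X = Xs (\<tau> t)"
  define r where "r = dim_row X"
  have X: "X \<in> carrier_mat r d" unfolding r_def X_def by (rule Xs_carrier[OF \<tau>_range])
  have X0: "X *\<^sub>v err t = 0\<^sub>v r"
    using mult_err_Suc_eq_0[of "t - 1"] assms by (simp add: X_def r_def)
  have diff: "err t - err (t + j) \<in> carrier_vec d" using err_carrier by simp
  have "X *\<^sub>v (err t - err (t + j)) = - (X *\<^sub>v err (t + j))"
    using mult_minus_distrib_mat_vec[OF X err_carrier err_carrier] X0 X err_carrier by simp
  then have "vnorm (X *\<^sub>v err (t + j)) \<le> vnorm (err t - err (t + j))"
    using vnorm_mult_mat_vec_le[OF X _ diff] spec_norm_Xs[OF \<tau>_range] vnorm_uminus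
    by (metis X_def)
  then have "(vnorm (X *\<^sub>v err (t + j)))\<^sup>2 \<le> (vnorm (err t - err (t + j)))\<^sup>2"
    using vnorm_nonneg by (intro power_mono) auto
  also have "\<dots> \<le> real j * (\<Sum>i<j. (vnorm (err (t + i) - err (t + Suc i)))\<^sup>2)"
    using vnorm_sq_diff_le_sum_steps[of "\<lambda>i. err (t + i)" d j] err_carrier by simp
  also have "(\<Sum>i<j. (vnorm (err (t + i) - err (t + Suc i)))\<^sup>2)
      = (\<Sum>i<j. (vnorm (err (t + i)))\<^sup>2 - (vnorm (err (t + Suc i)))\<^sup>2)"
    using err_step_sq by simp
  also have "\<dots> = (vnorm (err t))\<^sup>2 - (vnorm (err (t + j)))\<^sup>2"
    using sum_lessThan_telescope'[of "\<lambda>i. (vnorm (err (t + i)))\<^sup>2" j] by simp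
  finally show ?thesis by (simp add: X_def)
qed

end

locale cyclic_iteration = consistent_iteration d T Xs ys w "cyclic T" for d T Xs ys w
begin

lemma end_of_cycle_residual_sq_le:
  assumes m: "m \<in> {1..T}"
  shows "(vnorm (Xs m *\<^sub>v err (T * Suc q)))\<^sup>2
    \<le> (real T - real m) * ((vnorm (err (T * q)))\<^sup>2 - (vnorm (err (T * Suc q)))\<^sup>2)"
proof -
  have t: "T * q + m + (T - m) = T * Suc q" using m by simp
  have "(vnorm (Xs m *\<^sub>v err (T * Suc q)))\<^sup>2
      \<le> real (T - m) * ((vnorm (err (T * q + m)))\<^sup>2 - (vnorm (err (T * Suc q)))\<^sup>2)"
    using residual_sq_after_steps_le[of "T * q + m" "T - m"] m unfolding t cyclic_mult_add[OF m] by simp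
  also have "\<dots> \<le> real (T - m) * ((vnorm (err (T * q)))\<^sup>2 - (vnorm (err (T * Suc q)))\<^sup>2)"
    using err_sq_decreasing[of "T * q" m] by (intro mult_left_mono) auto
  finally show ?thesis using m by (simp add: of_nat_diff)
qed

lemma avg_iterate_residual_sq_le:
  assumes n: "1 \<le> n" and m: "m \<in> {1..T}"
  shows "(vnorm (Xs m *\<^sub>v avg_iterate d T Xs ys n - ys m))\<^sup>2
    \<le> (1 / real n) * (\<Sum>q<n. (vnorm (Xs m *\<^sub>v err (T * Suc q)))\<^sup>2)"
proof -
  define r where "r = dim_row (Xs m)"
  define avg where "avg = avg_iterate d T Xs ys n"
  have X: "Xs m \<in> carrier_mat r d" unfolding r_def by (rule Xs_carrier[OF m])
  have avg: "avg \<in> carrier_vec d" by (simp add: avg_def avg_iterate_def)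
  have avg_w: "(avg - w) $ i = (1 / real n) * (\<Sum>q<n. err (T * Suc q) $ i)" if i: "i < d" for i
  proof -
    have "(\<Sum>q<n. err (T * Suc q) $ i) = (\<Sum>q<n. iterate d (cyclic T) Xs ys (T * Suc q) $ i) - real n * w $ i"
      using i w_carrier iterate_carrier by (simp add: err_def sum_subtractf)
    moreover have "(\<Sum>n'=1..n. iterate d (cyclic T) Xs ys (T * n') $ i)
        = (\<Sum>q<n. iterate d (cyclic T) Xs ys (T * Suc q) $ i)"
      by (rule sum_bounds_lt_plus1[symmetric])
    ultimately show ?thesis
      using i n w_carrier by (simp add: avg_def avg_iterate_def field_simps)
  qed
  have "(vnorm (Xs m *\<^sub>v (avg - w)))\<^sup>2
      \<le> (1 / real n)\<^sup>2 * real (card {..<n}) * (\<Sum>q<n. (vnorm (Xs m *\<^sub>v err (T * Suc q)))\<^sup>2)"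
  proof (rule vnorm_sq_le_card_mult_sum)
    fix k assume "k < r"
    then show "(Xs m *\<^sub>v (avg - w)) $ k = (1 / real n) * (\<Sum>q<n. (Xs m *\<^sub>v err (T * Suc q)) $ k)"
      using mult_mat_vec_index_scaled_sum[OF X _ _ err_carrier avg_w] avg w_carrier by simp
  qed (use X avg w_carrier err_carrier in auto)
  moreover have "Xs m *\<^sub>v avg - ys m = Xs m *\<^sub>v (avg - w)"
    using ys_eq[OF m] mult_minus_distrib_mat_vec[OF X avg w_carrier] by simp
  ultimately show ?thesis using n by (simp add: avg_def power2_eq_square)
qed

lemma sum_avg_iterate_residual_sq_le:
  assumes n: "1 \<le> n" and w_norm: "vnorm w \<le> 1"
  shows "(\<Sum>m=1..T. (vnorm (Xs m *\<^sub>v avg_iterate d T Xs ys n - ys m))\<^sup>2)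
    \<le> real T * (real T - 1) / (2 * real n)"
proof -
  let ?a = "\<lambda>t. (vnorm (err t))\<^sup>2"
  have "(\<Sum>m=1..T. (vnorm (Xs m *\<^sub>v avg_iterate d T Xs ys n - ys m))\<^sup>2)
      \<le> (\<Sum>m=1..T. (1 / real n) * (\<Sum>q<n. (real T - real m) * (?a (T * q) - ?a (T * Suc q))))"
    using avg_iterate_residual_sq_le[OF n] end_of_cycle_residual_sq_le
    by (intro sum_mono order_trans[OF avg_iterate_residual_sq_le[OF n]] mult_left_mono) auto
  also have "\<dots> = (\<Sum>m=1..T. (1 / real n) * ((real T - real m) * (?a 0 - ?a (T * n))))"
    unfolding sum_distrib_left[symmetric] using sum_lessThan_telescope'[of "\<lambda>q. ?a (T * q)" n]
    by simp
  also have "\<dots> = (1 / real n) * (?a 0 - ?a (T * n)) * (\<Sum>m=1..T. real T - real m)"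
    unfolding sum_distrib_left[symmetric] sum_distrib_right[symmetric] by (simp add: mult_ac)
  also have "\<dots> \<le> (1 / real n) * 1 * (\<Sum>m=1..T. real T - real m)"
  proof -
    have "?a 0 = (vnorm w)\<^sup>2" using vnorm_uminus[of w] w_carrier by (simp add: err_def)
    moreover have "(vnorm w)\<^sup>2 \<le> 1" using w_norm vnorm_nonneg[of w] by (simp add: power_le_one)
    ultimately have "?a 0 - ?a (T * n) \<le> 1"
      using zero_le_power2[of "vnorm (err (T * n))"] by linarith
    then show ?thesis by (intro mult_right_mono mult_left_mono sum_nonneg) auto
  qed
  also have "(\<Sum>m=1..T. real T - real m) = real T * (real T - 1) / 2"
    using double_gauss_sum_from_Suc_0[of T, where 'a = real] by (simp add: sum_subtractf algebra_simps)
  finally show ?thesis by simp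
qed

end

theorem mainTheorem17:
  fixes d T n k :: nat and Xs :: "nat \<Rightarrow> real mat" and ys :: "nat \<Rightarrow> real vec"
  assumes "d \<ge> 1" and "T \<ge> 1" and "n \<ge> 1" and "k = n * T"
    and "in_S d T Xs ys"
  shows "(1 / real T) * (\<Sum>m=1..T. (vnorm (Xs m *\<^sub>v avg_iterate d T Xs ys n - ys m))\<^sup>2)
           \<le> (real T - 1) / (2 * real n)
       \<and> (real T - 1) / (2 * real n) \<le> (real T)\<^sup>2 / (2 * real k)"
proof -
  from \<open>in_S d T Xs ys\<close> obtain w where w: "w \<in> carrier_vec d" "vnorm w \<le> 1"
    and ys: "\<And>m. m \<in> {1..T} \<Longrightarrow> ys m = Xs m *\<^sub>v w"
    and tasks: "\<And>m. m \<in> {1..T} \<Longrightarrow> is_task d (Xs m) (ys m) \<and> spec_norm (Xs m) \<le> 1"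
    unfolding in_S_def by blast
  interpret cyclic_iteration d T Xs ys w
    using tasks ys w cyclic_in_range \<open>T \<ge> 1\<close> by unfold_locales (auto simp: is_task_def)
  have "(\<Sum>m=1..T. (vnorm (Xs m *\<^sub>v avg_iterate d T Xs ys n - ys m))\<^sup>2)
      \<le> real T * (real T - 1) / (2 * real n)"
    using sum_avg_iterate_residual_sq_le \<open>n \<ge> 1\<close> w(2) by blast
  then have "(1 / real T) * (\<Sum>m=1..T. (vnorm (Xs m *\<^sub>v avg_iterate d T Xs ys n - ys m))\<^sup>2)
      \<le> (real T - 1) / (2 * real n)"
    using \<open>T \<ge> 1\<close> by (simp add: field_simps)
  moreover have "(real T)\<^sup>2 / (2 * real k) = real T / (2 * real n)"
    using \<open>k = n * T\<close> \<open>T \<ge> 1\<close> by (simp add: power2_eq_square)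
  ultimately show ?thesis using \<open>n \<ge> 1\<close> by (simp add: divide_right_mono)
qed

end
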